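(* Assume the standing setup, let $H\le\Gamma$ and let $\mathcal G_H(P)$ be as defined in the context, for an object $P$ of $\mathcal L$. Regard $\Gamma/H$ as a discrete category (objects the left cosets, only identity morphisms). Then the functor $\delta_P:\mathcal G_H(P)\to\Gamma/H$ sending $(P^\alpha,\alpha)$ to $\widehat\Theta(\alpha)^{-1}H$ is well defined and is an equivalence of categories.
   Context: Standing setup: $(S,\mathcal F,\mathcal L)$ is a $p$-local finite group with centric linking system $\mathcal L$ (objects the $\mathcal F$-centric subgroups, projection $\pi:\mathcal L\to\mathcal F$), and a fixed compatible set of inclusions $\iota_P^Q$ ($\pi(\iota_P^Q)$ the inclusion, $\iota_Q^R\iota_P^Q=\iota_P^R$, $\iota_S^S=\mathrm{Id}$) with respect to which morphisms are restricted. For $\alpha\in\operatorname{Mor}_{\mathcal L}(P,S)$, $P^\alpha=\pi(\alpha)(P)$ and $\alpha$ also denotes the restricted isomorphism $P\to P^\alpha$. $\Gamma=\Gamma_{p'}(\mathcal F)$ (finite, order prime to $p$, a quotient of $\pi_1(|\mathcal L|,S)$) and $\widehat\Theta:\mathcal L\to\mathcal B(\Gamma)$ sends $f:P\to Q$ to the image of the class of the loop $\iota_Q^S*f*(\iota_P^S)^{-1}$; its restriction $\operatorname{Aut}_{\mathcal L}(S)\to\Gamma$ is surjective. $\mathcal L_H$ is the subcategory of $\mathcal L$ with all objects and morphisms $\widehat\Theta^{-1}(H)$, $\iota:\mathcal L_H\to\mathcal L$ the inclusion. $P\downarrow\iota$ has objects $(Q,\alpha)$, $\alpha\in\operatorname{Mor}_{\mathcal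 L}(P,Q)$, and morphisms $(Q,\alpha)\to(Q',\alpha')$ the $\psi\in\operatorname{Mor}_{\mathcal L_H}(Q,Q')$ with $\psi\alpha=\alpha'$; $\mathcal G_H(P)$ is its full subcategory on the objects $(P^\alpha,\alpha)$, $\alpha\in\operatorname{Mor}_{\mathcal L}(P,S)$. *)

theory Defs
  imports "HOL-Algebra.Algebra"
begin

record ('o, 'm) cat =
  ob  :: "'o set"
  ar  :: "'m set"
  sc  :: "'m \<Rightarrow> 'o"
  tg  :: "'m \<Rightarrow> 'o"
  cmp :: "'m \<Rightarrow> 'm \<Rightarrow> 'm"   (* cmp C g f = g o f *)
  idt :: "'o \<Rightarrow> 'm"

definition homs :: "('o, 'm) cat \<Rightarrow> 'o \<Rightarrow> 'o \<Rightarrow> 'm set" where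
  "homs C U V = {f \<in> ar C. sc C f = U \<and> tg C f = V}"

definition is_category :: "('o, 'm) cat \<Rightarrow> bool" where
  "is_category C \<longleftrightarrow>
     (\<forall>f\<in>ar C. sc C f \<in> ob C \<and> tg C f \<in> ob C) \<and>
     (\<forall>U\<in>ob C. idt C U \<in> homs C U U) \<and>
     (\<forall>U V T f g. f \<in> homs C U V \<longrightarrow> g \<in> homs C V T \<longrightarrow> cmp C g f \<in> homs C U T) \<and>
     (\<forall>R U V T f g h. f \<in> homs C R U \<longrightarrow> g \<in> homs C U V \<longrightarrow> h \<in> homs C V T \<longrightarrow>
        cmp C h (cmp C g f) = cmp C (cmp C h g) f) \<and>
     (\<forall>U V f. f \<in> homs C U V \<longrightarrow> cmp C (idt C V) f = f \<and> cmp C f (idt C U) = f)"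

definition is_functor :: "('o, 'm) cat \<Rightarrow> ('p, 'n) cat \<Rightarrow> ('o \<Rightarrow> 'p) \<Rightarrow> ('m \<Rightarrow> 'n) \<Rightarrow> bool" where
  "is_functor C D F0 F1 \<longleftrightarrow>
     (\<forall>U\<in>ob C. F0 U \<in> ob D) \<and>
     (\<forall>U V f. f \<in> homs C U V \<longrightarrow> F1 f \<in> homs D (F0 U) (F0 V)) \<and>
     (\<forall>U V T f g. f \<in> homs C U V \<longrightarrow> g \<in> homs C V T \<longrightarrow>
        F1 (cmp C g f) = cmp D (F1 g) (F1 f)) \<and>
     (\<forall>U\<in>ob C. F1 (idt C U) = idt D (F0 U))"

definition is_iso :: "('o, 'm) cat \<Rightarrow> 'm \<Rightarrow> bool" where
  "is_iso C f \<longleftrightarrow> f \<in> ar C \<and>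
     (\<exists>g\<in>homs C (tg C f) (sc C f). cmp C g f = idt C (sc C f) \<and> cmp C f g = idt C (tg C f))"

definition fully_faithful :: "('o, 'm) cat \<Rightarrow> ('p, 'n) cat \<Rightarrow> ('o \<Rightarrow> 'p) \<Rightarrow> ('m \<Rightarrow> 'n) \<Rightarrow> bool" where
  "fully_faithful C D F0 F1 \<longleftrightarrow>
     (\<forall>U\<in>ob C. \<forall>V\<in>ob C. bij_betw F1 (homs C U V) (homs D (F0 U) (F0 V)))"

definition essentially_surjective :: "('o, 'm) cat \<Rightarrow> ('p, 'n) cat \<Rightarrow> ('o \<Rightarrow> 'p) \<Rightarrow> bool" where
  "essentially_surjective C D F0 \<longleftrightarrow>
     (\<forall>V\<in>ob D. \<exists>U\<in>ob C. \<exists>f\<in>homs D (F0 U) V. is_iso D f)"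

text \<open>Equivalence of categories (in HOL with choice: a fully faithful,
  essentially surjective functor between categories).\<close>
definition equivalence_of_categories ::
  "('o, 'm) cat \<Rightarrow> ('p, 'n) cat \<Rightarrow> ('o \<Rightarrow> 'p) \<Rightarrow> ('m \<Rightarrow> 'n) \<Rightarrow> bool" where
  "equivalence_of_categories C D F0 F1 \<longleftrightarrow>
     is_category C \<and> is_category D \<and> is_functor C D F0 F1 \<and>
     fully_faithful C D F0 F1 \<and> essentially_surjective C D F0"

text \<open>Discrete category on a set: arrows are the identities, identified with the objects.\<close>
definition discrete_cat :: "'o set \<Rightarrow> ('o, 'o) cat" where
  "discrete_cat U = \<lparr>ob = U, ar = U, sc = id, tg = id, cmp = (\<lambda>g f. f), idt = id\<rparr>"

definition cj :: "('g, 'b) monoid_scheme \<Rightarrow> 'g \<Rightarrow> 'g \<Rightarrow> 'g" where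
  "cj G g x = g \<otimes>\<^bsub>G\<^esub> x \<otimes>\<^bsub>G\<^esub> inv\<^bsub>G\<^esub> g"

definition Cent :: "('g, 'b) monoid_scheme \<Rightarrow> 'g set \<Rightarrow> 'g set" where
  "Cent G P = {g \<in> carrier G. \<forall>x\<in>P. g \<otimes>\<^bsub>G\<^esub> x = x \<otimes>\<^bsub>G\<^esub> g}"

definition Norm :: "('g, 'b) monoid_scheme \<Rightarrow> 'g set \<Rightarrow> 'g set" where
  "Norm G P = {g \<in> carrier G. cj G g ` P = P}"

text \<open>Homomorphisms P -> Q are represented as functions extensional on P.\<close>
definition HomS :: "('g, 'b) monoid_scheme \<Rightarrow> 'g set \<Rightarrow> 'g set \<Rightarrow> ('g \<Rightarrow> 'g) set" where
  "HomS G P Q = {restrict (cj G g) P | g. g \<in> carrier G \<and> cj G g ` P \<subseteq> Q}"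

definition InjHom :: "('g, 'b) monoid_scheme \<Rightarrow> 'g set \<Rightarrow> 'g set \<Rightarrow> ('g \<Rightarrow> 'g) set" where
  "InjHom G P Q = {\<phi> \<in> extensional P. \<phi> ` P \<subseteq> Q \<and> inj_on \<phi> P \<and>
      (\<forall>x\<in>P. \<forall>y\<in>P. \<phi> (x \<otimes>\<^bsub>G\<^esub> y) = \<phi> x \<otimes>\<^bsub>G\<^esub> \<phi> y)}"

text \<open>A fusion system over S = carrier G: F P Q = Hom_F(P,Q) (empty unless P, Q are subgroups).\<close>
definition fusion_system ::
  "('g, 'b) monoid_scheme \<Rightarrow> ('g set \<Rightarrow> 'g set \<Rightarrow> ('g \<Rightarrow> 'g) set) \<Rightarrow> bool" where
  "fusion_system G F \<longleftrightarrow>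
     (\<forall>P Q. F P Q \<noteq> {} \<longrightarrow> subgroup P G \<and> subgroup Q G) \<and>
     (\<forall>P Q. subgroup P G \<longrightarrow> subgroup Q G \<longrightarrow> HomS G P Q \<subseteq> F P Q \<and> F P Q \<subseteq> InjHom G P Q) \<and>
     (\<forall>P Q R \<phi> \<psi>. \<phi> \<in> F P Q \<longrightarrow> \<psi> \<in> F Q R \<longrightarrow> restrict (\<psi> \<circ> \<phi>) P \<in> F P R) \<and>
     (\<forall>P Q \<phi>. \<phi> \<in> F P Q \<longrightarrow> \<phi> \<in> F P (\<phi> ` P) \<and> restrict (inv_into P \<phi>) (\<phi> ` P) \<in> F (\<phi> ` P) P)"

definition Fconj where
  "Fconj G F P Q \<longleftrightarrow> (\<exists>\<phi>\<in>F P (carrier G). Q = \<phi> ` P)"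

definition fully_centralized where
  "fully_centralized G F P \<longleftrightarrow> (\<forall>Q. Fconj G F P Q \<longrightarrow> card (Cent G Q) \<le> card (Cent G P))"

definition fully_normalized where
  "fully_normalized G F P \<longleftrightarrow> (\<forall>Q. Fconj G F P Q \<longrightarrow> card (Norm G Q) \<le> card (Norm G P))"

text \<open>Aut_S(P) is a Sylow p-subgroup of Aut_F(P).\<close>
definition sylow_aut where
  "sylow_aut p G F P \<longleftrightarrow> (\<exists>k. card (HomS G P P) = p ^ k) \<and>
      \<not> p dvd (card (F P P) div card (HomS G P P))"

definition Nphi where
  "Nphi G P \<phi> = {g \<in> Norm G P. \<exists>h\<in>Norm G (\<phi> ` P).
      \<forall>y\<in>\<phi> ` P. \<phi> (cj G g (inv_into P \<phi> y)) = cj G h y}"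

definition saturated_fusion_system where
  "saturated_fusion_system p G F \<longleftrightarrow> fusion_system G F \<and>
     (\<forall>P. subgroup P G \<longrightarrow> fully_normalized G F P \<longrightarrow>
        fully_centralized G F P \<and> sylow_aut p G F P) \<and>
     (\<forall>P \<phi>. \<phi> \<in> F P (carrier G) \<longrightarrow> fully_centralized G F (\<phi> ` P) \<longrightarrow>
        (\<exists>\<phi>'\<in>F (Nphi G P \<phi>) (carrier G). \<forall>x\<in>P. \<phi>' x = \<phi> x))"

definition F_centric where
  "F_centric G F P \<longleftrightarrow> subgroup P G \<and> (\<forall>Q. Fconj G F P Q \<longrightarrow> Cent G Q \<subseteq> Q)"

text \<open>prj is the projection L -> F on morphisms (identity on objects);
  dl P is the distinguished monomorphism delta_P : P -> Aut_L(P).\<close>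
definition centric_linking_system ::
  "('g, 'b) monoid_scheme \<Rightarrow> ('g set \<Rightarrow> 'g set \<Rightarrow> ('g \<Rightarrow> 'g) set) \<Rightarrow> ('g set, 'm) cat
     \<Rightarrow> ('m \<Rightarrow> 'g \<Rightarrow> 'g) \<Rightarrow> ('g set \<Rightarrow> 'g \<Rightarrow> 'm) \<Rightarrow> bool" where
  "centric_linking_system G F L prj dl \<longleftrightarrow>
     is_category L \<and> ob L = {P. F_centric G F P} \<and>
     (\<forall>f\<in>ar L. prj f \<in> F (sc L f) (tg L f)) \<and>
     (\<forall>P\<in>ob L. prj (idt L P) = restrict id P) \<and>
     (\<forall>P Q R f g. f \<in> homs L P Q \<longrightarrow> g \<in> homs L Q R \<longrightarrow>
        prj (cmp L g f) = restrict (prj g \<circ> prj f) P) \<and>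
     (\<forall>P\<in>ob L. \<forall>x\<in>P. dl P x \<in> homs L P P) \<and>
     (\<forall>P\<in>ob L. \<forall>x\<in>P. \<forall>y\<in>P. dl P (x \<otimes>\<^bsub>G\<^esub> y) = cmp L (dl P x) (dl P y)) \<and>
     (\<forall>P\<in>ob L. inj_on (dl P) P) \<and>
     \<comment> \<open>axiom (A)\<close>
     (\<forall>P\<in>ob L. \<forall>Q\<in>ob L. prj ` homs L P Q = F P Q) \<and>
     (\<forall>P\<in>ob L. \<forall>Q\<in>ob L. \<forall>f\<in>homs L P Q. \<forall>f'\<in>homs L P Q.
        prj f = prj f' \<longleftrightarrow> (\<exists>z\<in>Cent G P \<inter> P. f' = cmp L f (dl P z))) \<and>
     (\<forall>P\<in>ob L. \<forall>Q\<in>ob L. \<forall>f\<in>homs L P Q. \<forall>z\<in>Cent G P \<inter> P.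
        cmp L f (dl P z) = f \<longrightarrow> z = \<one>\<^bsub>G\<^esub>) \<and>
     \<comment> \<open>axiom (B)\<close>
     (\<forall>P\<in>ob L. \<forall>x\<in>P. prj (dl P x) = restrict (cj G x) P) \<and>
     \<comment> \<open>axiom (C)\<close>
     (\<forall>P\<in>ob L. \<forall>Q\<in>ob L. \<forall>f\<in>homs L P Q. \<forall>x\<in>P.
        cmp L f (dl P x) = cmp L (dl Q (prj f x)) f)"

definition p_local_finite_group where
  "p_local_finite_group p G F L prj dl \<longleftrightarrow>
     Factorial_Ring.prime (p::nat) \<and> group G \<and> finite (carrier G) \<and> (\<exists>n. card (carrier G) = p ^ n) \<and>
     saturated_fusion_system p G F \<and> centric_linking_system G F L prj dl"

definition compatible_inclusions where
  "compatible_inclusions G L prj io \<longleftrightarrow>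
     (\<forall>P\<in>ob L. \<forall>Q\<in>ob L. P \<subseteq> Q \<longrightarrow> io P Q \<in> homs L P Q \<and> prj (io P Q) = restrict id P) \<and>
     (\<forall>P\<in>ob L. \<forall>Q\<in>ob L. \<forall>R\<in>ob L. P \<subseteq> Q \<longrightarrow> Q \<subseteq> R \<longrightarrow>
        cmp L (io Q R) (io P Q) = io P R) \<and>
     io (carrier G) (carrier G) = idt L (carrier G)"

text \<open>For alpha : P -> S, P^alpha = prj(alpha)(P), and the restricted isomorphism P -> P^alpha.\<close>
definition upper :: "('g set, 'm) cat \<Rightarrow> ('m \<Rightarrow> 'g \<Rightarrow> 'g) \<Rightarrow> 'm \<Rightarrow> 'g set" where
  "upper L prj \<alpha> = prj \<alpha> ` sc L \<alpha>"

definition restr where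
  "restr G L prj io \<alpha> = (THE \<beta>. \<beta> \<in> homs L (sc L \<alpha>) (upper L prj \<alpha>) \<and>
       cmp L (io (upper L prj \<alpha>) (carrier G)) \<beta> = \<alpha>)"

text \<open>Theta : L -> B(Gamma) induced (via the loop construction
  f |-> [iota_Q^S * f * (iota_P^S)^-1]) by a surjection from pi_1(|L|,S) onto a finite
  p'-group Gamma.  Such maps are exactly the functors L -> B(Gamma) killing all
  iota_P^S; surjectivity is the stated surjectivity on Aut_L(S).\<close>
definition theta_setup where
  "theta_setup p G L io \<Gamma> \<Theta> \<longleftrightarrow>
     group \<Gamma> \<and> finite (carrier \<Gamma>) \<and> coprime (card (carrier \<Gamma>)) (p::nat) \<and>
     (\<forall>f\<in>ar L. \<Theta> f \<in> carrier \<Gamma>) \<and>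
     (\<forall>P Q R f g. f \<in> homs L P Q \<longrightarrow> g \<in> homs L Q R \<longrightarrow>
        \<Theta> (cmp L g f) = \<Theta> g \<otimes>\<^bsub>\<Gamma>\<^esub> \<Theta> f) \<and>
     (\<forall>P\<in>ob L. \<Theta> (idt L P) = \<one>\<^bsub>\<Gamma>\<^esub>) \<and>
     (\<forall>P\<in>ob L. \<Theta> (io P (carrier G)) = \<one>\<^bsub>\<Gamma>\<^esub>) \<and>
     \<Theta> ` homs L (carrier G) (carrier G) = carrier \<Gamma>"

text \<open>Objects: pairs (P^alpha, alpha) with alpha the restricted isomorphism.
  Morphisms: triples (source, target, psi) with psi a morphism of L_H (Theta psi in H)
  and psi o alpha = alpha'.\<close>
definition GH_cat where
  "GH_cat G L prj io \<Theta> H P =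
     (let Obs = {(upper L prj \<alpha>, restr G L prj io \<alpha>) | \<alpha>. \<alpha> \<in> homs L P (carrier G)} in
      \<lparr>ob = Obs,
       ar = {(x, y, \<psi>) | x y \<psi>. x \<in> Obs \<and> y \<in> Obs \<and> \<psi> \<in> homs L (fst x) (fst y) \<and>
                                \<Theta> \<psi> \<in> H \<and> cmp L \<psi> (snd x) = snd y},
       sc = (\<lambda>(x, y, \<psi>). x),
       tg = (\<lambda>(x, y, \<psi>). y),
       cmp = (\<lambda>(y', z, \<psi>') (x, y, \<psi>). (x, z, cmp L \<psi>' \<psi>)),
       idt = (\<lambda>x. (x, x, idt L (fst x)))\<rparr>)"

definition coset_space where
  "coset_space \<Gamma> H = {g <#\<^bsub>\<Gamma>\<^esub> H | g. g \<in> carrier \<Gamma>}"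

definition delta0 where
  "delta0 \<Gamma> \<Theta> H x = inv\<^bsub>\<Gamma>\<^esub> (\<Theta> (snd x)) <#\<^bsub>\<Gamma>\<^esub> H"

definition delta1 where
  "delta1 \<Gamma> \<Theta> H = (\<lambda>(x, y, \<psi>). delta0 \<Gamma> \<Theta> H x)"

end

theory Submission
  imports Defs
begin

(* The proof rests on two facts about the centric linking system L.
   (1) Every morphism of L is a monomorphism, and a morphism whose projection to F is onto its
       target is an isomorphism.  Consequently each alpha : P -> S factors uniquely through the
       inclusion of its image P^alpha, and the restricted morphism alpha : P -> P^alpha is an
       isomorphism with Theta(alpha : P -> P^alpha) = Theta(alpha), as Theta kills inclusions.
   (2) Hence between objects U = (P^alpha, alpha) and V = (P^beta, beta) of G_H(P) the only
       possible morphism is beta o alpha^-1, and it lies in L_H iff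
       Theta(beta) Theta(alpha)^-1 is in H, i.e. iff the cosets Theta(alpha)^-1 H and
       Theta(beta)^-1 H agree.  So G_H(P) is a preorder, delta_P is a fully faithful functor,
       and it is surjective on objects because Theta maps Aut_L(S) onto Gamma. *)

lemma (in group) inv_l_coset_eq_iff:
  assumes "subgroup H G" and "a \<in> carrier G" and "b \<in> carrier G"
  shows "inv a <#\<^bsub>G\<^esub> H = inv b <#\<^bsub>G\<^esub> H \<longleftrightarrow> b \<otimes> inv a \<in> H"
proof -
  have "inv a <#\<^bsub>G\<^esub> H = inv b <#\<^bsub>G\<^esub> H \<longleftrightarrow> inv b \<in> inv a <#\<^bsub>G\<^esub> H"
  proof
    assume "inv a <#\<^bsub>G\<^esub> H = inv b <#\<^bsub>G\<^esub> H"
    then show "inv b \<in> inv a <#\<^bsub>G\<^esub> H" using lcos_self[OF inv_closed[OF assms(3)] assms(1)] by simp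
  next
    assume "inv b \<in> inv a <#\<^bsub>G\<^esub> H"
    then show "inv a <#\<^bsub>G\<^esub> H = inv b <#\<^bsub>G\<^esub> H"
      using l_repr_independence[OF _ inv_closed[OF assms(2)] assms(1)] by blast
  qed
  also have "\<dots> \<longleftrightarrow> a \<otimes> inv b \<in> H"
    using assms subgroup.lcos_module_imp[of H G "inv a" "inv b"]
      subgroup.lcos_module_rev[of H G "inv a" "inv b"] is_group by auto
  also have "\<dots> \<longleftrightarrow> b \<otimes> inv a \<in> H"
    using assms subgroup.m_inv_closed[OF assms(1)] inv_mult_group by fastforce
  finally show ?thesis .
qed

context
  fixes C :: "('o, 'a) cat"
  assumes category: "is_category C"
begin

lemma cat_id_hom: "U \<in> ob C \<Longrightarrow> idt C U \<in> homs C U U"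
  using category unfolding is_category_def by blast

lemma cat_comp_hom: "f \<in> homs C U V \<Longrightarrow> g \<in> homs C V T \<Longrightarrow> cmp C g f \<in> homs C U T"
  using category unfolding is_category_def by blast

lemma cat_assoc:
  "f \<in> homs C R U \<Longrightarrow> g \<in> homs C U V \<Longrightarrow> h \<in> homs C V T \<Longrightarrow>
     cmp C h (cmp C g f) = cmp C (cmp C h g) f"
  using category unfolding is_category_def by blast

lemma cat_id_left: "f \<in> homs C U V \<Longrightarrow> cmp C (idt C V) f = f"
  using category unfolding is_category_def by blast

lemma cat_id_right: "f \<in> homs C U V \<Longrightarrow> cmp C f (idt C U) = f"
  using category unfolding is_category_def by blast

lemma cat_right_inverse_twosided:
  assumes f: "f \<in> homs C U V" and g: "g \<in> homs C V U" and h: "h \<in> homs C U V"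
    and fg: "cmp C f g = idt C V" and gh: "cmp C g h = idt C U"
  shows "cmp C g f = idt C U"
proof -
  have "f = cmp C f (cmp C g h)" using gh cat_id_right[OF f] by simp
  also have "\<dots> = h" using cat_assoc[OF h g f] fg cat_id_left[OF h] by simp
  finally show ?thesis using gh by simp
qed

end

lemma homs_discrete: "homs (discrete_cat Y) u v = (if u \<in> Y \<and> u = v then {u} else {})"
  unfolding homs_def discrete_cat_def by auto

lemma category_discrete: "is_category (discrete_cat Y)"
  unfolding is_category_def homs_def discrete_cat_def by auto

lemma iso_discrete: "u \<in> Y \<Longrightarrow> is_iso (discrete_cat Y) u"
  unfolding is_iso_def homs_def discrete_cat_def by simp

locale linking_system =
  fixes G :: "'g monoid" and F :: "'g set \<Rightarrow> 'g set \<Rightarrow> ('g \<Rightarrow> 'g) set"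
    and L :: "('g set, 'm) cat" and prj :: "'m \<Rightarrow> 'g \<Rightarrow> 'g" and dl :: "'g set \<Rightarrow> 'g \<Rightarrow> 'm"
  assumes linking: "centric_linking_system G F L prj dl"
    and fusion: "fusion_system G F"
    and group_S: "group G"
    and finite_S: "finite (carrier G)"
begin

lemma linking_axioms:
  "is_category L"
  "ob L = {P. F_centric G F P}"
  "\<forall>f\<in>ar L. prj f \<in> F (sc L f) (tg L f)"
  "\<forall>P\<in>ob L. prj (idt L P) = restrict id P"
  "\<forall>P Q R f g. f \<in> homs L P Q \<longrightarrow> g \<in> homs L Q R \<longrightarrow> prj (cmp L g f) = restrict (prj g \<circ> prj f) P"
  "\<forall>P\<in>ob L. \<forall>x\<in>P. dl P x \<in> homs L P P"
  "\<forall>P\<in>ob L. \<forall>x\<in>P. \<forall>y\<in>P. dl P (x \<otimes>\<^bsub>G\<^esub> y) = cmp L (dl P x) (dl P y)"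
  "\<forall>P\<in>ob L. \<forall>Q\<in>ob L. prj ` homs L P Q = F P Q"
  "\<forall>P\<in>ob L. \<forall>Q\<in>ob L. \<forall>f\<in>homs L P Q. \<forall>f'\<in>homs L P Q.
     prj f = prj f' \<longleftrightarrow> (\<exists>z\<in>Cent G P \<inter> P. f' = cmp L f (dl P z))"
  "\<forall>P\<in>ob L. \<forall>Q\<in>ob L. \<forall>f\<in>homs L P Q. \<forall>z\<in>Cent G P \<inter> P. cmp L f (dl P z) = f \<longrightarrow> z = \<one>\<^bsub>G\<^esub>"
  "\<forall>P\<in>ob L. \<forall>x\<in>P. prj (dl P x) = restrict (cj G x) P"
  using linking unfolding centric_linking_system_def by simp_all

lemmas category_L = linking_axioms(1)
  and ob_L = linking_axioms(2)
  and prj_idt = linking_axioms(4)[rule_format]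
  and prj_cmp = linking_axioms(5)[rule_format]
  and dl_hom = linking_axioms(6)[rule_format]
  and dl_mult = linking_axioms(7)[rule_format]
  and prj_homs_eq_F = linking_axioms(8)[rule_format]
  and prj_dl = linking_axioms(11)[rule_format]

lemmas L_id_hom = cat_id_hom[OF category_L]
  and L_comp_hom = cat_comp_hom[OF category_L]
  and L_assoc = cat_assoc[OF category_L]
  and L_id_left = cat_id_left[OF category_L]
  and L_id_right = cat_id_right[OF category_L]

lemma prj_in_F: "f \<in> homs L P Q \<Longrightarrow> prj f \<in> F P Q"
  using linking_axioms(3) unfolding homs_def by blast

lemma prj_eq_dl_factor:
  "P \<in> ob L \<Longrightarrow> Q \<in> ob L \<Longrightarrow> f \<in> homs L P Q \<Longrightarrow> f' \<in> homs L P Q \<Longrightarrow> prj f = prj f' \<Longrightarrow>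
     \<exists>z\<in>Cent G P \<inter> P. f' = cmp L f (dl P z)"
  using linking_axioms(9) by blast

text \<open>Axiom (A): \<open>Z(P)\<close> acts freely on the morphisms out of \<open>P\<close>.\<close>
lemmas dl_free = linking_axioms(10)[rule_format]

lemma fusion_axioms:
  "\<forall>P Q. F P Q \<noteq> {} \<longrightarrow> subgroup P G \<and> subgroup Q G"
  "\<forall>P Q. subgroup P G \<longrightarrow> subgroup Q G \<longrightarrow> HomS G P Q \<subseteq> F P Q \<and> F P Q \<subseteq> InjHom G P Q"
  "\<forall>P Q R \<phi> \<psi>. \<phi> \<in> F P Q \<longrightarrow> \<psi> \<in> F Q R \<longrightarrow> restrict (\<psi> \<circ> \<phi>) P \<in> F P R"
  "\<forall>P Q \<phi>. \<phi> \<in> F P Q \<longrightarrow> \<phi> \<in> F P (\<phi> ` P) \<and> restrict (inv_into P \<phi>) (\<phi> ` P) \<in> F (\<phi> ` P) P"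
  using fusion unfolding fusion_system_def by simp_all

lemmas F_comp = fusion_axioms(3)[rule_format]

lemma F_onto_image: "\<phi> \<in> F P Q \<Longrightarrow> \<phi> \<in> F P (\<phi> ` P)"
  using fusion_axioms(4) by blast

lemma F_inverse: "\<phi> \<in> F P Q \<Longrightarrow> restrict (inv_into P \<phi>) (\<phi> ` P) \<in> F (\<phi> ` P) P"
  using fusion_axioms(4) by blast

lemma F_subgroups: "\<phi> \<in> F P Q \<Longrightarrow> subgroup P G \<and> subgroup Q G"
  using fusion_axioms(1) by blast

lemma F_injective:
  assumes "\<phi> \<in> F P Q"
  shows "\<phi> \<in> extensional P" and "\<phi> ` P \<subseteq> Q" and "inj_on \<phi> P"
  using assms F_subgroups[OF assms] fusion_axioms(2) unfolding InjHom_def by blast+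

lemma prj_injective:
  assumes "f \<in> homs L P Q"
  shows "prj f \<in> extensional P" and "prj f ` P \<subseteq> Q" and "inj_on (prj f) P"
  using F_injective[OF prj_in_F[OF assms]] by blast+

lemma ob_subgroup: "P \<in> ob L \<Longrightarrow> subgroup P G"
  unfolding ob_L mem_Collect_eq F_centric_def by blast

text \<open>\<open>S\<close> is \<open>\<F>\<close>-centric: its only \<open>\<F>\<close>-conjugate is itself, since \<open>S\<close> is finite and
  morphisms of \<open>\<F>\<close> are injective.\<close>
lemma S_ob: "carrier G \<in> ob L"
proof -
  have "Cent G Q \<subseteq> Q" if FQ: "Fconj G F (carrier G) Q" for Q
  proof -
    obtain \<phi> where \<phi>: "\<phi> \<in> F (carrier G) (carrier G)" "Q = \<phi> ` carrier G"
      using FQ unfolding Fconj_def by blast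
    then have "Q = carrier G" using F_injective[OF \<phi>(1)] finite_S by (simp add: endo_inj_surj)
    then show ?thesis unfolding Cent_def by blast
  qed
  then show ?thesis unfolding ob_L mem_Collect_eq F_centric_def using group.subgroup_self[OF group_S] by blast
qed

text \<open>The image of a centric subgroup under a morphism of \<open>\<F>\<close> is centric, because its
  \<open>\<F>\<close>-conjugates are \<open>\<F>\<close>-conjugates of the source.\<close>
lemma image_ob:
  assumes P: "P \<in> ob L" and \<phi>: "\<phi> \<in> F P Q"
  shows "\<phi> ` P \<in> ob L"
proof -
  have \<phi>': "\<phi> \<in> F P (\<phi> ` P)" using F_onto_image[OF \<phi>] .
  have "Cent G R \<subseteq> R" if FR: "Fconj G F (\<phi> ` P) R" for R
  proof -
    obtain \<chi> where \<chi>: "\<chi> \<in> F (\<phi> ` P) (carrier G)" "R = \<chi> ` \<phi> ` P"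
      using FR unfolding Fconj_def by blast
    have "restrict (\<chi> \<circ> \<phi>) P \<in> F P (carrier G)" using F_comp[OF \<phi>' \<chi>(1)] .
    moreover have "restrict (\<chi> \<circ> \<phi>) P ` P = R" using \<chi>(2) by auto
    ultimately have "Fconj G F P R" unfolding Fconj_def by metis
    then show ?thesis using P unfolding ob_L mem_Collect_eq F_centric_def by blast
  qed
  then show ?thesis using F_subgroups[OF \<phi>'] unfolding ob_L mem_Collect_eq F_centric_def by blast
qed

lemma trivial_projection_is_dl:
  assumes Q: "Q \<in> ob L" and f: "f \<in> homs L Q Q" and prj_f: "prj f = restrict id Q"
  shows "\<exists>z\<in>Q. f = dl Q z"
proof -
  obtain z where z: "z \<in> Cent G Q \<inter> Q" "f = cmp L (idt L Q) (dl Q z)"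
    using prj_eq_dl_factor[OF Q Q L_id_hom[OF Q] f] prj_f prj_idt[OF Q] by auto
  then show ?thesis using L_id_left[OF dl_hom[OF Q]] by auto
qed

text \<open>\<open>\<delta>_P(1)\<close> is an idempotent projecting to the identity, hence, by axiom (A), it is
  the identity.\<close>
lemma dl_one:
  assumes P: "P \<in> ob L"
  shows "dl P \<one>\<^bsub>G\<^esub> = idt L P"
proof -
  have sg: "subgroup P G" using ob_subgroup[OF P] .
  have one: "\<one>\<^bsub>G\<^esub> \<in> P" using subgroup.one_closed[OF sg] .
  define d where "d = dl P \<one>\<^bsub>G\<^esub>"
  have d: "d \<in> homs L P P" using dl_hom[OF P one] d_def by simp
  have idem: "cmp L d d = d" using dl_mult[OF P one one] group.is_monoid[OF group_S] d_def by simp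
  have "prj d = restrict id P"
    using prj_dl[OF P one] subgroup.mem_carrier[OF sg] group_S
    by (auto simp: d_def cj_def fun_eq_iff group.is_monoid monoid.inv_one)
  then obtain z where z: "z \<in> P" "idt L P = cmp L d (dl P z)"
    using prj_eq_dl_factor[OF P P d L_id_hom[OF P]] prj_idt[OF P] by auto
  have "d = cmp L d (idt L P)" using L_id_right[OF d] by simp
  also have "\<dots> = cmp L d (dl P z)" using z(2) L_assoc[OF dl_hom[OF P z(1)] d d] idem by simp
  finally show ?thesis using z(2) d_def by simp
qed

lemma right_inverse:
  assumes P: "P \<in> ob L" and Q: "Q \<in> ob L" and \<beta>: "\<beta> \<in> homs L P Q" and onto: "prj \<beta> ` P = Q"
  shows "\<exists>\<gamma>\<in>homs L Q P. cmp L \<beta> \<gamma> = idt L Q \<and> prj \<gamma> ` Q = P"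
proof -
  have "restrict (inv_into P (prj \<beta>)) Q \<in> F Q P" using F_inverse[OF prj_in_F[OF \<beta>]] onto by simp
  then obtain \<gamma>' where \<gamma>': "\<gamma>' \<in> homs L Q P" "prj \<gamma>' = restrict (inv_into P (prj \<beta>)) Q"
    using prj_homs_eq_F[OF Q P] by (metis imageE)
  have "prj (cmp L \<beta> \<gamma>') = restrict id Q"
    using prj_cmp[OF \<gamma>'(1) \<beta>] \<gamma>'(2) onto by (auto simp: fun_eq_iff f_inv_into_f)
  then obtain z where z: "z \<in> Q" "cmp L \<beta> \<gamma>' = dl Q z"
    using trivial_projection_is_dl[OF Q L_comp_hom[OF \<gamma>'(1) \<beta>]] by blast
  have sg: "subgroup Q G" using ob_subgroup[OF Q] .
  have z': "inv\<^bsub>G\<^esub> z \<in> Q" using subgroup.m_inv_closed[OF sg z(1)] .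
  define \<gamma> where "\<gamma> = cmp L \<gamma>' (dl Q (inv\<^bsub>G\<^esub> z))"
  have \<gamma>: "\<gamma> \<in> homs L Q P" using L_comp_hom[OF dl_hom[OF Q z'] \<gamma>'(1)] \<gamma>_def by simp
  have "cmp L \<beta> \<gamma> = cmp L (dl Q z) (dl Q (inv\<^bsub>G\<^esub> z))"
    using L_assoc[OF dl_hom[OF Q z'] \<gamma>'(1) \<beta>] z(2) \<gamma>_def by simp
  also have "\<dots> = idt L Q"
    using dl_mult[OF Q z(1) z'] group.r_inv[OF group_S subgroup.mem_carrier[OF sg z(1)]] dl_one[OF Q]
    by simp
  finally have right: "cmp L \<beta> \<gamma> = idt L Q" .
  have "P \<subseteq> prj \<gamma> ` Q"
  proof
    fix x assume x: "x \<in> P"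
    have y: "prj \<beta> x \<in> Q" using x onto by blast
    have "prj \<beta> (prj \<gamma> (prj \<beta> x)) = prj \<beta> x"
      using arg_cong[OF right, of "\<lambda>f. prj f (prj \<beta> x)"] prj_cmp[OF \<gamma> \<beta>] prj_idt[OF Q] y by simp
    then have "prj \<gamma> (prj \<beta> x) = x"
      using prj_injective[OF \<beta>] prj_injective[OF \<gamma>] x y by (blast dest: inj_onD)
    then show "x \<in> prj \<gamma> ` Q" using y by (metis image_eqI)
  qed
  then have "prj \<gamma> ` Q = P" using prj_injective[OF \<gamma>] by blast
  then show ?thesis using \<gamma> right by blast
qed

lemma inverse_of_onto:
  assumes P: "P \<in> ob L" and Q: "Q \<in> ob L" and \<beta>: "\<beta> \<in> homs L P Q" and onto: "prj \<beta> ` P = Q"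
  shows "\<exists>\<gamma>\<in>homs L Q P. cmp L \<beta> \<gamma> = idt L Q \<and> cmp L \<gamma> \<beta> = idt L P"
proof -
  obtain \<gamma> where \<gamma>: "\<gamma> \<in> homs L Q P" "cmp L \<beta> \<gamma> = idt L Q" "prj \<gamma> ` Q = P"
    using right_inverse[OF P Q \<beta> onto] by blast
  obtain \<delta> where \<delta>: "\<delta> \<in> homs L P Q" "cmp L \<gamma> \<delta> = idt L P"
    using right_inverse[OF Q P \<gamma>(1,3)] by blast
  show ?thesis
    using cat_right_inverse_twosided[OF category_L \<beta> \<gamma>(1) \<delta>(1) \<gamma>(2) \<delta>(2)] \<gamma> by blast
qed

text \<open>Every morphism of \<open>\<L>\<close> is a monomorphism: equal projections force the two morphisms
  to differ by \<open>\<delta>_P(z)\<close>, and the free action of \<open>Z(P)\<close> forces \<open>z = 1\<close>.\<close>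
lemma mono:
  assumes P: "P \<in> ob L" and Q: "Q \<in> ob L" and R: "R \<in> ob L"
    and f: "f \<in> homs L Q R" and \<beta>: "\<beta> \<in> homs L P Q" and \<gamma>: "\<gamma> \<in> homs L P Q"
    and eq: "cmp L f \<beta> = cmp L f \<gamma>"
  shows "\<beta> = \<gamma>"
proof -
  have "prj \<beta> x = prj \<gamma> x" if x: "x \<in> P" for x
  proof -
    have "prj f (prj \<beta> x) = prj f (prj \<gamma> x)"
      using arg_cong[OF eq, of "\<lambda>h. prj h x"] prj_cmp[OF \<beta> f] prj_cmp[OF \<gamma> f] x by simp
    moreover have "prj \<beta> x \<in> Q" and "prj \<gamma> x \<in> Q"
      using prj_injective(2)[OF \<beta>] prj_injective(2)[OF \<gamma>] x by blast+
    ultimately show ?thesis using inj_onD[OF prj_injective(3)[OF f]] by blast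
  qed
  then have "prj \<beta> = prj \<gamma>"
    using prj_injective(1)[OF \<beta>] prj_injective(1)[OF \<gamma>] by (rule extensionalityI[rotated 2])
  then obtain z where z: "z \<in> Cent G P \<inter> P" "\<gamma> = cmp L \<beta> (dl P z)"
    using prj_eq_dl_factor[OF P Q \<beta> \<gamma>] by blast
  have dz: "dl P z \<in> homs L P P" using dl_hom[OF P] z(1) by blast
  have "cmp L (cmp L f \<beta>) (dl P z) = cmp L f \<gamma>" using L_assoc[OF dz \<beta> f] z(2) by simp
  then have "cmp L (cmp L f \<beta>) (dl P z) = cmp L f \<beta>" using eq by simp
  then have "z = \<one>\<^bsub>G\<^esub>" using dl_free[OF P R L_comp_hom[OF \<beta> f] z(1)] by blast
  then show ?thesis using z(2) dl_one[OF P] L_id_right[OF \<beta>] by simp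
qed

end

locale linking_system_with_inclusions = linking_system +
  fixes io :: "'g set \<Rightarrow> 'g set \<Rightarrow> 'm"
  assumes inclusions: "compatible_inclusions G L prj io"
begin

lemma inclusion_hom:
  assumes "Q \<in> ob L"
  shows "io Q (carrier G) \<in> homs L Q (carrier G)" and "prj (io Q (carrier G)) = restrict id Q"
proof -
  have "\<forall>P\<in>ob L. \<forall>Q\<in>ob L. P \<subseteq> Q \<longrightarrow> io P Q \<in> homs L P Q \<and> prj (io P Q) = restrict id P"
    using inclusions unfolding compatible_inclusions_def by simp
  then show "io Q (carrier G) \<in> homs L Q (carrier G)" and "prj (io Q (carrier G)) = restrict id Q"
    using assms S_ob subgroup.subset[OF ob_subgroup[OF assms]] by blast+
qed

lemma prj_inclusion_comp:
  assumes Q: "Q \<in> ob L" and \<beta>: "\<beta> \<in> homs L P Q"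
  shows "prj (cmp L (io Q (carrier G)) \<beta>) = prj \<beta>"
  using prj_cmp[OF \<beta>] inclusion_hom[OF Q] prj_injective[OF \<beta>]
  by (auto simp: fun_eq_iff restrict_def extensional_def)

lemma factor_through_image:
  assumes P: "P \<in> ob L" and \<alpha>: "\<alpha> \<in> homs L P (carrier G)"
  shows "\<exists>\<beta>\<in>homs L P (prj \<alpha> ` P). cmp L (io (prj \<alpha> ` P) (carrier G)) \<beta> = \<alpha>"
proof -
  define Q where "Q = prj \<alpha> ` P"
  have Q: "Q \<in> ob L" using image_ob[OF P prj_in_F[OF \<alpha>]] Q_def by simp
  have io: "io Q (carrier G) \<in> homs L Q (carrier G)" using inclusion_hom(1)[OF Q] .
  have "prj \<alpha> \<in> F P Q" using F_onto_image[OF prj_in_F[OF \<alpha>]] Q_def by simp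
  then obtain \<beta>' where \<beta>': "\<beta>' \<in> homs L P Q" "prj \<beta>' = prj \<alpha>"
    using prj_homs_eq_F[OF P Q] by (metis imageE)
  obtain z where z: "z \<in> Cent G P \<inter> P" "\<alpha> = cmp L (cmp L (io Q (carrier G)) \<beta>') (dl P z)"
    using prj_eq_dl_factor[OF P S_ob L_comp_hom[OF \<beta>'(1) io] \<alpha>] prj_inclusion_comp[OF Q \<beta>'(1)] \<beta>'(2)
    by auto
  have dz: "dl P z \<in> homs L P P" using dl_hom[OF P] z(1) by blast
  have "cmp L (io Q (carrier G)) (cmp L \<beta>' (dl P z)) = \<alpha>" using z(2) L_assoc[OF dz \<beta>'(1) io] by simp
  then show ?thesis using L_comp_hom[OF dz \<beta>'(1)] unfolding Q_def by blast
qed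

text \<open>The restricted isomorphism \<open>\<alpha> : P \<rightarrow> P\<^sup>\<alpha>\<close> is the unique such factorization,
  since inclusions are monomorphisms.\<close>
lemma restriction:
  assumes P: "P \<in> ob L" and \<alpha>: "\<alpha> \<in> homs L P (carrier G)"
  shows "upper L prj \<alpha> = prj \<alpha> ` P" and "prj \<alpha> ` P \<in> ob L"
    and "restr G L prj io \<alpha> \<in> homs L P (prj \<alpha> ` P)"
    and "cmp L (io (prj \<alpha> ` P) (carrier G)) (restr G L prj io \<alpha>) = \<alpha>"
    and "prj (restr G L prj io \<alpha>) = prj \<alpha>"
proof -
  define Q where "Q = prj \<alpha> ` P"
  have sc: "sc L \<alpha> = P" using \<alpha> unfolding homs_def by simp
  show up: "upper L prj \<alpha> = prj \<alpha> ` P" unfolding upper_def sc ..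
  show Q: "prj \<alpha> ` P \<in> ob L" using image_ob[OF P prj_in_F[OF \<alpha>]] .
  have "\<exists>!\<beta>. \<beta> \<in> homs L P Q \<and> cmp L (io Q (carrier G)) \<beta> = \<alpha>"
    using factor_through_image[OF P \<alpha>] mono[OF P Q[folded Q_def] S_ob inclusion_hom(1)] Q
    unfolding Q_def by metis
  then have "restr G L prj io \<alpha> \<in> homs L P Q \<and> cmp L (io Q (carrier G)) (restr G L prj io \<alpha>) = \<alpha>"
    unfolding restr_def sc up Q_def[symmetric] by (rule theI')
  then show "restr G L prj io \<alpha> \<in> homs L P (prj \<alpha> ` P)"
    and fac: "cmp L (io (prj \<alpha> ` P) (carrier G)) (restr G L prj io \<alpha>) = \<alpha>"
    unfolding Q_def by blast+
  show "prj (restr G L prj io \<alpha>) = prj \<alpha>"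
    using prj_inclusion_comp[OF Q \<open>restr G L prj io \<alpha> \<in> homs L P (prj \<alpha> ` P)\<close>] fac by simp
qed

end

locale GH_setup = linking_system_with_inclusions +
  fixes p :: nat and \<Gamma> :: "'x monoid" and \<Theta> :: "'m \<Rightarrow> 'x" and H :: "'x set" and P :: "'g set"
  assumes theta: "theta_setup p G L io \<Gamma> \<Theta>"
    and subgroup_H: "subgroup H \<Gamma>"
    and P_ob: "P \<in> ob L"
begin

lemma theta_axioms:
  "group \<Gamma>"
  "\<forall>f\<in>ar L. \<Theta> f \<in> carrier \<Gamma>"
  "\<forall>P Q R f g. f \<in> homs L P Q \<longrightarrow> g \<in> homs L Q R \<longrightarrow> \<Theta> (cmp L g f) = \<Theta> g \<otimes>\<^bsub>\<Gamma>\<^esub> \<Theta> f"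
  "\<forall>P\<in>ob L. \<Theta> (idt L P) = \<one>\<^bsub>\<Gamma>\<^esub>"
  "\<forall>P\<in>ob L. \<Theta> (io P (carrier G)) = \<one>\<^bsub>\<Gamma>\<^esub>"
  "\<Theta> ` homs L (carrier G) (carrier G) = carrier \<Gamma>"
  using theta unfolding theta_setup_def by simp_all

lemmas group_\<Gamma> = theta_axioms(1)
  and \<Theta>_cmp = theta_axioms(3)[rule_format]
  and \<Theta>_idt = theta_axioms(4)[rule_format]
  and \<Theta>_inclusion = theta_axioms(5)[rule_format]
  and \<Theta>_onto = theta_axioms(6)

lemma \<Theta>_carrier: "f \<in> homs L U V \<Longrightarrow> \<Theta> f \<in> carrier \<Gamma>"
  using theta_axioms(2) unfolding homs_def by blast

text \<open>\<open>\<Theta>\<close> kills inclusions, so \<open>\<alpha>\<close> and its restriction \<open>P \<rightarrow> P\<^sup>\<alpha>\<close> have the same image.\<close>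
lemma \<Theta>_restr:
  assumes \<alpha>: "\<alpha> \<in> homs L P (carrier G)"
  shows "\<Theta> (restr G L prj io \<alpha>) = \<Theta> \<alpha>"
proof -
  note r = restriction[OF P_ob \<alpha>]
  have "\<Theta> \<alpha> = \<Theta> (io (prj \<alpha> ` P) (carrier G)) \<otimes>\<^bsub>\<Gamma>\<^esub> \<Theta> (restr G L prj io \<alpha>)"
    using \<Theta>_cmp[OF r(3) inclusion_hom(1)[OF r(2)]] r(4) by simp
  then show ?thesis
    using \<Theta>_inclusion[OF r(2)] \<Theta>_carrier[OF r(3)] group.is_monoid[OF group_\<Gamma>] by simp
qed

abbreviation GH :: "(('g set \<times> 'm), ('g set \<times> 'm) \<times> ('g set \<times> 'm) \<times> 'm) cat" where
  "GH \<equiv> GH_cat G L prj io \<Theta> H P"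

abbreviation cosets :: "('x set, 'x set) cat" where
  "cosets \<equiv> discrete_cat (coset_space \<Gamma> H)"

lemma ob_GH: "ob GH = {(upper L prj \<alpha>, restr G L prj io \<alpha>) | \<alpha>. \<alpha> \<in> homs L P (carrier G)}"
  by (simp add: GH_cat_def Let_def)

lemma homs_GH_iff:
  "f \<in> homs GH U V \<longleftrightarrow> U \<in> ob GH \<and> V \<in> ob GH \<and>
     (\<exists>\<psi>. f = (U, V, \<psi>) \<and> \<psi> \<in> homs L (fst U) (fst V) \<and> \<Theta> \<psi> \<in> H \<and> cmp L \<psi> (snd U) = snd V)"
  unfolding homs_def[of GH] by (auto simp: GH_cat_def Let_def)

lemma cmp_GH: "cmp GH (V, T, \<psi>') (U, V, \<psi>) = (U, T, cmp L \<psi>' \<psi>)"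
  by (simp add: GH_cat_def Let_def)

lemma idt_GH: "idt GH U = (U, U, idt L (fst U))"
  by (simp add: GH_cat_def Let_def)

lemma ob_GH_facts:
  assumes "U \<in> ob GH"
  shows "fst U \<in> ob L" and "snd U \<in> homs L P (fst U)" and "prj (snd U) ` P = fst U"
proof -
  obtain \<alpha> where \<alpha>: "\<alpha> \<in> homs L P (carrier G)" "U = (upper L prj \<alpha>, restr G L prj io \<alpha>)"
    using assms unfolding ob_GH by blast
  note r = restriction[OF P_ob \<alpha>(1)]
  show "fst U \<in> ob L" and "snd U \<in> homs L P (fst U)" and "prj (snd U) ` P = fst U"
    using r \<alpha>(2) by simp_all
qed

lemma category_GH: "is_category GH"
proof -
  have "\<forall>f\<in>ar GH. sc GH f \<in> ob GH \<and> tg GH f \<in> ob GH"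
    by (auto simp: GH_cat_def Let_def)
  moreover have "idt GH U \<in> homs GH U U" if U: "U \<in> ob GH" for U
  proof -
    note u = ob_GH_facts[OF U]
    have "\<Theta> (idt L (fst U)) \<in> H" using \<Theta>_idt[OF u(1)] subgroup.one_closed[OF subgroup_H] by simp
    then show ?thesis using U L_id_hom[OF u(1)] L_id_left[OF u(2)] unfolding homs_GH_iff idt_GH by blast
  qed
  moreover have "cmp GH g f \<in> homs GH U T" if f: "f \<in> homs GH U V" and g: "g \<in> homs GH V T"
    for U V T f g
  proof -
    obtain \<psi> where \<psi>: "f = (U, V, \<psi>)" "\<psi> \<in> homs L (fst U) (fst V)" "\<Theta> \<psi> \<in> H"
      "cmp L \<psi> (snd U) = snd V" and U: "U \<in> ob GH"
      using f unfolding homs_GH_iff by blast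
    obtain \<psi>' where \<psi>': "g = (V, T, \<psi>')" "\<psi>' \<in> homs L (fst V) (fst T)" "\<Theta> \<psi>' \<in> H"
      "cmp L \<psi>' (snd V) = snd T" and T: "T \<in> ob GH"
      using g unfolding homs_GH_iff by blast
    have "\<Theta> (cmp L \<psi>' \<psi>) \<in> H"
      using \<Theta>_cmp[OF \<psi>(2) \<psi>'(2)] \<psi>(3) \<psi>'(3) subgroup.m_closed[OF subgroup_H] by simp
    moreover have "cmp L (cmp L \<psi>' \<psi>) (snd U) = snd T"
      using L_assoc[OF ob_GH_facts(2)[OF U] \<psi>(2) \<psi>'(2)] \<psi>(4) \<psi>'(4) by simp
    ultimately show ?thesis
      using U T L_comp_hom[OF \<psi>(2) \<psi>'(2)] unfolding homs_GH_iff \<psi>(1) \<psi>'(1) cmp_GH by blast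
  qed
  moreover have "\<forall>R U V T f g h. f \<in> homs GH R U \<longrightarrow> g \<in> homs GH U V \<longrightarrow> h \<in> homs GH V T \<longrightarrow>
      cmp GH h (cmp GH g f) = cmp GH (cmp GH h g) f"
    using L_assoc by (auto simp: homs_GH_iff cmp_GH)
  moreover have "\<forall>U V f. f \<in> homs GH U V \<longrightarrow> cmp GH (idt GH V) f = f \<and> cmp GH f (idt GH U) = f"
    using L_id_left L_id_right by (auto simp: homs_GH_iff cmp_GH idt_GH)
  ultimately show ?thesis unfolding is_category_def by blast
qed

text \<open>Between two objects \<open>U, V\<close> of \<open>\<G>_H(P)\<close> the only candidate morphism is
  \<open>\<psi> = snd V \<circ> (snd U)\<^sup>-\<^sup>1\<close>; it is a morphism of \<open>\<G>_H(P)\<close> exactly when \<open>\<Theta>(\<psi>) \<in> H\<close>.\<close>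
lemma homs_GH_eq:
  assumes U: "U \<in> ob GH" and V: "V \<in> ob GH"
  obtains \<psi> where "\<Theta> \<psi> = \<Theta> (snd V) \<otimes>\<^bsub>\<Gamma>\<^esub> inv\<^bsub>\<Gamma>\<^esub> \<Theta> (snd U)"
    and "homs GH U V = (if \<Theta> \<psi> \<in> H then {(U, V, \<psi>)} else {})"
proof -
  note u = ob_GH_facts[OF U] and v = ob_GH_facts[OF V]
  obtain \<gamma> where \<gamma>: "\<gamma> \<in> homs L (fst U) P" "cmp L (snd U) \<gamma> = idt L (fst U)"
      "cmp L \<gamma> (snd U) = idt L P"
    using inverse_of_onto[OF P_ob u] by blast
  define \<psi> where "\<psi> = cmp L (snd V) \<gamma>"
  have \<psi>: "\<psi> \<in> homs L (fst U) (fst V)" using L_comp_hom[OF \<gamma>(1) v(2)] \<psi>_def by simp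
  have "\<Theta> \<gamma> \<otimes>\<^bsub>\<Gamma>\<^esub> \<Theta> (snd U) = \<one>\<^bsub>\<Gamma>\<^esub>" using \<Theta>_cmp[OF u(2) \<gamma>(1)] \<gamma>(3) \<Theta>_idt[OF P_ob] by simp
  then have "\<Theta> \<gamma> = inv\<^bsub>\<Gamma>\<^esub> \<Theta> (snd U)"
    using group.inv_equality[OF group_\<Gamma> _ \<Theta>_carrier[OF u(2)] \<Theta>_carrier[OF \<gamma>(1)]] by simp
  then have \<Theta>\<psi>: "\<Theta> \<psi> = \<Theta> (snd V) \<otimes>\<^bsub>\<Gamma>\<^esub> inv\<^bsub>\<Gamma>\<^esub> \<Theta> (snd U)"
    using \<Theta>_cmp[OF \<gamma>(1) v(2)] \<psi>_def by simp
  have \<psi>_transports: "cmp L \<psi> (snd U) = snd V"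
    using L_assoc[OF u(2) \<gamma>(1) v(2)] \<gamma>(3) L_id_right[OF v(2)] \<psi>_def by simp
  have only_\<psi>: "\<chi> = \<psi>" if \<chi>: "\<chi> \<in> homs L (fst U) (fst V)" "cmp L \<chi> (snd U) = snd V" for \<chi>
  proof -
    have "\<chi> = cmp L \<chi> (cmp L (snd U) \<gamma>)" using \<gamma>(2) L_id_right[OF \<chi>(1)] by simp
    also have "\<dots> = \<psi>" using L_assoc[OF \<gamma>(1) u(2) \<chi>(1)] \<chi>(2) \<psi>_def by simp
    finally show ?thesis .
  qed
  have "f \<in> homs GH U V \<longleftrightarrow> f = (U, V, \<psi>) \<and> \<Theta> \<psi> \<in> H" for f
    using U V \<psi> \<psi>_transports only_\<psi> unfolding homs_GH_iff by blast
  then have "homs GH U V = (if \<Theta> \<psi> \<in> H then {(U, V, \<psi>)} else {})" by auto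
  then show ?thesis using that \<Theta>\<psi> by blast
qed

lemma delta0_in_cosets: "U \<in> ob GH \<Longrightarrow> delta0 \<Gamma> \<Theta> H U \<in> coset_space \<Gamma> H"
  unfolding delta0_def coset_space_def
  using group.inv_closed[OF group_\<Gamma> \<Theta>_carrier[OF ob_GH_facts(2)]] by blast

lemma delta0_eq_iff:
  assumes "U \<in> ob GH" and "V \<in> ob GH"
  shows "delta0 \<Gamma> \<Theta> H U = delta0 \<Gamma> \<Theta> H V \<longleftrightarrow> \<Theta> (snd V) \<otimes>\<^bsub>\<Gamma>\<^esub> inv\<^bsub>\<Gamma>\<^esub> \<Theta> (snd U) \<in> H"
  unfolding delta0_def
  using group.inv_l_coset_eq_iff[OF group_\<Gamma> subgroup_H]
    \<Theta>_carrier[OF ob_GH_facts(2)[OF assms(1)]] \<Theta>_carrier[OF ob_GH_facts(2)[OF assms(2)]] .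

lemma homs_GH_delta:
  assumes U: "U \<in> ob GH" and V: "V \<in> ob GH"
  shows "homs GH U V \<noteq> {} \<longleftrightarrow> delta0 \<Gamma> \<Theta> H U = delta0 \<Gamma> \<Theta> H V"
    and "f \<in> homs GH U V \<Longrightarrow> f' \<in> homs GH U V \<Longrightarrow> f = f'"
proof -
  obtain \<psi> where \<psi>: "\<Theta> \<psi> = \<Theta> (snd V) \<otimes>\<^bsub>\<Gamma>\<^esub> inv\<^bsub>\<Gamma>\<^esub> \<Theta> (snd U)"
    and homs: "homs GH U V = (if \<Theta> \<psi> \<in> H then {(U, V, \<psi>)} else {})"
    using homs_GH_eq[OF U V] .
  show "homs GH U V \<noteq> {} \<longleftrightarrow> delta0 \<Gamma> \<Theta> H U = delta0 \<Gamma> \<Theta> H V"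
    using homs \<psi> delta0_eq_iff[OF U V] by simp
  show "f \<in> homs GH U V \<Longrightarrow> f' \<in> homs GH U V \<Longrightarrow> f = f'"
    using homs by (simp split: if_splits)
qed

lemma delta1_hom: "f \<in> homs GH U V \<Longrightarrow> delta1 \<Gamma> \<Theta> H f = delta0 \<Gamma> \<Theta> H U"
  unfolding homs_GH_iff delta1_def by auto

lemma functor_delta: "is_functor GH cosets (delta0 \<Gamma> \<Theta> H) (delta1 \<Gamma> \<Theta> H)"
proof -
  have "delta1 \<Gamma> \<Theta> H f \<in> homs cosets (delta0 \<Gamma> \<Theta> H U) (delta0 \<Gamma> \<Theta> H V)"
    if f: "f \<in> homs GH U V" for U V f
  proof -
    have U: "U \<in> ob GH" and V: "V \<in> ob GH" using f unfolding homs_GH_iff by simp_all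
    then have "delta0 \<Gamma> \<Theta> H U = delta0 \<Gamma> \<Theta> H V" using homs_GH_delta(1)[OF U V] f by blast
    then show ?thesis using delta1_hom[OF f] delta0_in_cosets[OF U] by (simp add: homs_discrete)
  qed
  moreover have "delta1 \<Gamma> \<Theta> H (cmp GH g f) = cmp cosets (delta1 \<Gamma> \<Theta> H g) (delta1 \<Gamma> \<Theta> H f)"
    if "f \<in> homs GH U V" "g \<in> homs GH V T" for U V T f g
    using that by (auto simp: homs_GH_iff cmp_GH delta1_def discrete_cat_def)
  ultimately show ?thesis
    unfolding is_functor_def
    by (auto simp: delta0_in_cosets idt_GH delta1_def discrete_cat_def)
qed

text \<open>Both hom-sets are singletons or empty, simultaneously.\<close>
lemma fully_faithful_delta: "fully_faithful GH cosets (delta0 \<Gamma> \<Theta> H) (delta1 \<Gamma> \<Theta> H)"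
  unfolding fully_faithful_def
proof (intro ballI)
  fix U V assume U: "U \<in> ob GH" and V: "V \<in> ob GH"
  show "bij_betw (delta1 \<Gamma> \<Theta> H) (homs GH U V) (homs cosets (delta0 \<Gamma> \<Theta> H U) (delta0 \<Gamma> \<Theta> H V))"
  proof (cases "homs GH U V = {}")
    case True
    then show ?thesis using homs_GH_delta(1)[OF U V] by (simp add: homs_discrete bij_betw_def)
  next
    case False
    then obtain f where f: "homs GH U V = {f}" using homs_GH_delta(2)[OF U V] by blast
    then show ?thesis
      using homs_GH_delta(1)[OF U V] delta1_hom[of f U V] delta0_in_cosets[OF U]
      by (simp add: homs_discrete)
  qed
qed

text \<open>Every coset \<open>gH\<close> is hit: lift \<open>g\<^sup>-\<^sup>1\<close> to \<open>Aut_\<L>(S)\<close> and restrict it to \<open>P\<close>.\<close>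
lemma essentially_surjective_delta: "essentially_surjective GH cosets (delta0 \<Gamma> \<Theta> H)"
  unfolding essentially_surjective_def
proof
  fix C assume "C \<in> ob cosets"
  then obtain g where g: "g \<in> carrier \<Gamma>" "C = g <#\<^bsub>\<Gamma>\<^esub> H"
    unfolding discrete_cat_def coset_space_def by auto
  have g': "inv\<^bsub>\<Gamma>\<^esub> g \<in> carrier \<Gamma>" using group.inv_closed[OF group_\<Gamma> g(1)] .
  obtain \<alpha>\<^sub>S where \<alpha>\<^sub>S: "\<alpha>\<^sub>S \<in> homs L (carrier G) (carrier G)" "\<Theta> \<alpha>\<^sub>S = inv\<^bsub>\<Gamma>\<^esub> g"
    using \<Theta>_onto g' by (metis imageE)
  have io: "io P (carrier G) \<in> homs L P (carrier G)" using inclusion_hom(1)[OF P_ob] .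
  define \<alpha> where "\<alpha> = cmp L \<alpha>\<^sub>S (io P (carrier G))"
  have \<alpha>: "\<alpha> \<in> homs L P (carrier G)" using L_comp_hom[OF io \<alpha>\<^sub>S(1)] \<alpha>_def by simp
  have "\<Theta> \<alpha> = inv\<^bsub>\<Gamma>\<^esub> g"
    using \<Theta>_cmp[OF io \<alpha>\<^sub>S(1)] \<Theta>_inclusion[OF P_ob] \<alpha>\<^sub>S(2) g' group.is_monoid[OF group_\<Gamma>] \<alpha>_def
    by simp
  define U where "U = (upper L prj \<alpha>, restr G L prj io \<alpha>)"
  have U: "U \<in> ob GH" unfolding ob_GH U_def using \<alpha> by blast
  have "delta0 \<Gamma> \<Theta> H U = C"
    unfolding delta0_def U_def using \<Theta>_restr[OF \<alpha>] \<open>\<Theta> \<alpha> = inv\<^bsub>\<Gamma>\<^esub> g\<close> group.inv_inv[OF group_\<Gamma> g(1)] g(2)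
    by simp
  then have "C \<in> homs cosets (delta0 \<Gamma> \<Theta> H U) C" and "is_iso cosets C"
    using delta0_in_cosets[OF U] iso_discrete by (auto simp: homs_discrete)
  then show "\<exists>U\<in>ob GH. \<exists>f\<in>homs cosets (delta0 \<Gamma> \<Theta> H U) C. is_iso cosets f"
    using U by blast
qed

theorem equivalence_delta: "equivalence_of_categories GH cosets (delta0 \<Gamma> \<Theta> H) (delta1 \<Gamma> \<Theta> H)"
  unfolding equivalence_of_categories_def
  using category_GH category_discrete functor_delta fully_faithful_delta essentially_surjective_delta
  by blast

end

theorem lemma3p11:
  fixes p :: nat and G :: "'g monoid" and F :: "'g set \<Rightarrow> 'g set \<Rightarrow> ('g \<Rightarrow> 'g) set"
    and L :: "('g set, 'm) cat" and prj :: "'m \<Rightarrow> 'g \<Rightarrow> 'g" and dl :: "'g set \<Rightarrow> 'g \<Rightarrow> 'm"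
    and io :: "'g set \<Rightarrow> 'g set \<Rightarrow> 'm"
    and \<Gamma> :: "'x monoid" and \<Theta> :: "'m \<Rightarrow> 'x" and H :: "'x set" and P :: "'g set"
  assumes "p_local_finite_group p G F L prj dl"
    and "compatible_inclusions G L prj io"
    and "theta_setup p G L io \<Gamma> \<Theta>"
    and "subgroup H \<Gamma>"
    and "P \<in> ob L"
  shows "equivalence_of_categories (GH_cat G L prj io \<Theta> H P) (discrete_cat (coset_space \<Gamma> H))
           (delta0 \<Gamma> \<Theta> H) (delta1 \<Gamma> \<Theta> H)"
proof -
  have "linking_system G F L prj dl"
    using assms(1) unfolding linking_system_def p_local_finite_group_def saturated_fusion_system_def
    by blast
  then interpret GH_setup G F L prj dl io p \<Gamma> \<Theta> H P
    using assms(2-5)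
    by (simp add: GH_setup_def GH_setup_axioms_def linking_system_with_inclusions_def
        linking_system_with_inclusions_axioms_def)
  show ?thesis by (rule equivalence_delta)
qed

end
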